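(* In the setting below, let $p,q\in X$ with $S_p\subsetneq S_q$ and $|S_p|\ge 2$, and write $p=\sum_{e_i\in S_p}\lambda_ie_i$, $q=\sum_{e_i\in S_q}\theta_ie_i$ (normalized by the convention). Then $\lambda_i=\theta_i$ for every $e_i\in S_p$.
   Context: Setting: $E=\{e_0,\dots,e_n\}\subset\mathbb R^n$ is the vertex set of an $n$-simplex with $e_0+\cdots+e_n=0$, and $X\subset\mathbb R^n\setminus\{0\}$ is a finite set with $E\subseteq X$, no element of $X$ a positive multiple of another, such that every $n+1$ points of $X$ are in good position. (A finite set $A$ is in conical position if $0\notin\operatorname{conv}A$ and no point of $A$ lies in the positive hull—set of nonnegative linear combinations—of the other points; it is in good position otherwise.) For $p\in X$, the support $S_p$ is the minimal subset of $E$ whose positive hull contains $p$; then $p=\sum_{e_i\in S_p}\lambda_ie_i$ uniquely with all $\lambda_i>0$. Convention: each $p\in X$ is replaced by the positive multiple for which $\min_{e_i\in S_p}\lambda_i=1$. *)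

theory Defs
  imports "HOL-Analysis.Analysis"
begin

definition pos_hull :: "'a::real_vector set \<Rightarrow> 'a set" where
  "pos_hull A = {y. \<exists>c. (\<forall>a\<in>A. 0 \<le> c a) \<and> y = (\<Sum>a\<in>A. c a *\<^sub>R a)}"

definition conical_position :: "'a::real_vector set \<Rightarrow> bool" where
  "conical_position A \<longleftrightarrow> 0 \<notin> convex hull A \<and> (\<forall>a\<in>A. a \<notin> pos_hull (A - {a}))"

definition good_position :: "'a::real_vector set \<Rightarrow> bool" where
  "good_position A \<longleftrightarrow> \<not> conical_position A"

definition is_support :: "'a::real_vector set \<Rightarrow> 'a \<Rightarrow> 'a set \<Rightarrow> bool" where
  "is_support E p S \<longleftrightarrow> S \<subseteq> E \<and> p \<in> pos_hull S \<and> (\<forall>T. T \<subset> S \<longrightarrow> p \<notin> pos_hull T)"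

end

theory Submission
  imports Defs
begin

text \<open>Up to scaling, the only linear relation among the vertices of a simplex centred at the
  origin is the sum of all vertices. Hence replacing one or two vertices of E by points of X gives
  an (n+1)-set whose linear relations form a line; if that line is spanned by a vector with two
  positive and two negative entries, the set is in conical position, which the hypothesis forbids.
  For (E - {z, m}) plus p and q, with z outside S_q and m in S_p, this makes the ratio
  theta/lam constant on S_p, say theta = c lam. For (E - {b}) plus q, with theta b = 1 minimal,
  it shows that theta exceeds 1 at no two vertices; as min lam = 1 and |S_p| \<ge> 2, c = 1.\<close>

lemma sum_scaleR_extend_zero:
  fixes c :: "'a::real_vector \<Rightarrow> real"
  assumes "finite E" "S \<subseteq> E"
  shows "(\<Sum>e\<in>S. c e *\<^sub>R e) = (\<Sum>e\<in>E. (if e \<in> S then c e else 0) *\<^sub>R e)"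
proof -
  have "(\<Sum>e\<in>E. (if e \<in> S then c e else 0) *\<^sub>R e) = (\<Sum>e\<in>E. if e \<in> S then c e *\<^sub>R e else 0)"
    by (rule sum.cong) auto
  also have "\<dots> = (\<Sum>e\<in>E \<inter> S. c e *\<^sub>R e)"
    using assms(1) by (simp add: sum.inter_restrict)
  finally show ?thesis
    using assms(2) by (simp add: Int_absorb1)
qed

lemma conical_position_if_relations_multiple:
  fixes A :: "'a::real_vector set"
  assumes fin: "finite A"
    and relations: "\<And>u. (\<Sum>x\<in>A. u x *\<^sub>R x) = 0 \<Longrightarrow> \<exists>s. \<forall>x\<in>A. u x = s * w x"
    and pos: "a \<in> A" "b \<in> A" "a \<noteq> b" "w a > 0" "w b > 0"
    and neg: "c \<in> A" "d \<in> A" "c \<noteq> d" "w c < 0" "w d < 0"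
  shows "conical_position A"
  unfolding conical_position_def
proof
  show "0 \<notin> convex hull A"
  proof
    assume "0 \<in> convex hull A"
    then obtain u where u: "\<forall>x\<in>A. 0 \<le> u x" "sum u A = 1" "(\<Sum>x\<in>A. u x *\<^sub>R x) = 0"
      unfolding convex_hull_finite[OF fin] by auto
    obtain s where s: "\<forall>x\<in>A. u x = s * w x"
      using relations[OF u(3)] by blast
    have "0 \<le> s * w a" "0 \<le> s * w c"
      using u(1) s pos neg by auto
    then have "s = 0"
      using pos neg by (smt (verit) mult_neg_pos mult_pos_neg)
    then show False
      using s u(2) by simp
  qed
  show "\<forall>v\<in>A. v \<notin> pos_hull (A - {v})"
  proof (intro ballI notI)
    fix v assume vA: "v \<in> A" and "v \<in> pos_hull (A - {v})"
    then obtain \<mu> where \<mu>: "\<forall>x\<in>A-{v}. 0 \<le> \<mu> x" "v = (\<Sum>x\<in>A-{v}. \<mu> x *\<^sub>R x)"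
      unfolding pos_hull_def by auto
    define u where "u x = (if x = v then -1 else \<mu> x)" for x
    have "(\<Sum>x\<in>A. u x *\<^sub>R x) = u v *\<^sub>R v + (\<Sum>x\<in>A-{v}. u x *\<^sub>R x)"
      using sum.remove[OF fin vA] by blast
    also have "(\<Sum>x\<in>A-{v}. u x *\<^sub>R x) = (\<Sum>x\<in>A-{v}. \<mu> x *\<^sub>R x)"
      by (rule sum.cong) (auto simp: u_def)
    finally have "(\<Sum>x\<in>A. u x *\<^sub>R x) = 0"
      using \<mu>(2) by (simp add: u_def)
    then obtain s where s: "\<forall>x\<in>A. u x = s * w x"
      using relations by blast
    \<comment> \<open>u is negative only at v, while s w is negative at two points unless s = 0.\<close>
    obtain x where x: "x \<in> A" "x \<noteq> v" "w x > 0"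
      using pos by metis
    obtain y where y: "y \<in> A" "y \<noteq> v" "w y < 0"
      using neg by metis
    have "0 \<le> u x" "0 \<le> u y"
      using x y \<mu>(1) by (auto simp: u_def)
    then have "0 \<le> s * w x" "0 \<le> s * w y"
      using s x(1) y(1) by auto
    then have "s = 0"
      using x y by (smt (verit) mult_neg_pos mult_pos_neg)
    then show False
      using s vA by (auto simp: u_def)
  qed
qed

lemma Min_image_eq_oneD:
  fixes f :: "'a \<Rightarrow> real"
  assumes "finite S" "S \<noteq> {}" "Min (f ` S) = 1"
  obtains j where "j \<in> S" "f j = 1" "\<forall>e\<in>S. 1 \<le> f e"
proof -
  have "Min (f ` S) \<in> f ` S" and Min_le: "\<forall>e\<in>S. Min (f ` S) \<le> f e"
    using assms(1,2) by simp_all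
  then obtain j where "j \<in> S" "f j = 1"
    using assms(3) by auto
  then show thesis
    using that assms(3) Min_le by simp
qed

locale zero_sum_simplex =
  fixes E :: "'a::real_vector set"
  assumes finite_E: "finite E"
    and independent_E: "\<not> affine_dependent E"
    and sum_E: "(\<Sum>e\<in>E. e) = 0"
begin

lemma relation_const:
  assumes "(\<Sum>e\<in>E. d e *\<^sub>R e) = 0" "x \<in> E" "y \<in> E"
  shows "d x = d y"
proof -
  define m where "m = sum d E / card E"
  have "card E > 0"
    using assms(2) finite_E card_gt_0_iff by blast
  then have "sum (\<lambda>e. d e - m) E = 0"
    by (simp add: sum_subtractf m_def)
  moreover have "(\<Sum>e\<in>E. (d e - m) *\<^sub>R e) = 0"
    using assms(1) sum_E by (simp add: scaleR_diff_left sum_subtractf scaleR_sum_right[symmetric])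
  ultimately have "\<forall>v\<in>E. d v - m = 0"
    using independent_E affine_dependent_explicit_finite[OF finite_E] by blast
  then show ?thesis
    using assms(2,3) by auto
qed

lemma combination_notin:
  assumes SE: "S \<subseteq> E" and card_S: "card S \<ge> 2" and z: "z \<in> E" "z \<notin> S"
    and c: "\<forall>e\<in>S. c e > 0" "x = (\<Sum>e\<in>S. c e *\<^sub>R e)"
  shows "x \<notin> E"
proof
  assume xE: "x \<in> E"
  define d where "d e = (if e \<in> S then c e else 0) - (if e = x then 1 else 0)" for e
  have "(\<Sum>e\<in>E. (if e = x then 1 else 0) *\<^sub>R e) = (\<Sum>e\<in>E. if e = x then e else 0)"
    by (rule sum.cong) auto
  also have "\<dots> = x"
    using finite_E xE by simp
  finally have "(\<Sum>e\<in>E. d e *\<^sub>R e) = 0"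
    using sum_scaleR_extend_zero[OF finite_E SE, of c] c(2)
    by (simp add: d_def scaleR_diff_left sum_subtractf)
  moreover obtain i where i: "i \<in> S" "i \<noteq> x"
    using card_S finite_subset[OF SE finite_E]
    by (metis card_le_Suc0_iff_eq not_less_eq_eq numeral_2_eq_2)
  ultimately have "d i = d z"
    using relation_const SE z by blast
  then show False
    using i z c(1) by (auto simp: d_def split: if_splits)
qed

lemma support_neq:
  assumes supp: "is_support E q S" and "S \<noteq> {}"
  shows "S \<noteq> E"
proof
  assume SE: "S = E"
  obtain c where c: "\<forall>e\<in>E. 0 \<le> c e" "q = (\<Sum>e\<in>E. c e *\<^sub>R e)"
    using supp SE unfolding is_support_def pos_hull_def by auto
  have fin: "finite (c ` E)" "c ` E \<noteq> {}"
    using finite_E assms(2) SE by auto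
  obtain j where "j \<in> E" "c j = Min (c ` E)"
    using Min_in[OF fin] by auto
  then have j: "j \<in> E" "\<forall>e\<in>E. c j \<le> c e"
    using fin by simp_all
  \<comment> \<open>Subtracting the minimal coefficient times the vanishing sum of E removes the vertex j.\<close>
  have "(\<Sum>e\<in>E. (c e - c j) *\<^sub>R e) = q"
    using c(2) sum_E by (simp add: scaleR_diff_left sum_subtractf scaleR_sum_right[symmetric])
  moreover have "(\<Sum>e\<in>E. (c e - c j) *\<^sub>R e) = (\<Sum>e\<in>E-{j}. (c e - c j) *\<^sub>R e)"
    using sum.remove[OF finite_E j(1), of "\<lambda>e. (c e - c j) *\<^sub>R e"] by simp
  ultimately have "q \<in> pos_hull (E - {j})"
    unfolding pos_hull_def using j(2) by (intro CollectI exI[of _ "\<lambda>e. c e - c j"]) auto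
  moreover have "E - {j} \<subset> S"
    using SE j by auto
  ultimately show False
    using supp unfolding is_support_def by blast
qed

end

locale good_configuration = zero_sum_simplex E for E :: "'a::euclidean_space set" +
  fixes X :: "'a set"
  assumes card_E: "card E = DIM('a) + 1"
    and E_subset: "E \<subseteq> X"
    and good: "\<forall>A. A \<subseteq> X \<and> card A = DIM('a) + 1 \<longrightarrow> good_position A"
begin

lemma coeff_not_above_twice:
  assumes qX: "q \<in> X" and SE: "S \<subseteq> E" and z: "z \<in> E" "z \<notin> S"
    and th: "\<forall>e\<in>S. th e > 0" "q = (\<Sum>e\<in>S. th e *\<^sub>R e)"
    and k: "k \<in> S" and ij: "i \<in> S" "j \<in> S" "i \<noteq> j"
  shows "th i \<le> th k \<or> th j \<le> th k"
proof (rule ccontr)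
  assume "\<not> ?thesis"
  then have above: "th i > th k" "th j > th k"
    by auto
  have "card S \<ge> 2"
    using ij finite_subset[OF SE finite_E]
    by (metis card_le_Suc0_iff_eq not_less_eq_eq numeral_2_eq_2)
  then have qE: "q \<notin> E"
    using combination_notin[OF SE _ z th] by simp
  define A where "A = insert q (E - {k})"
  define th' where "th' x = (if x \<in> S then th x else 0)" for x
  \<comment> \<open>The relation of A is q - (sum of (th e - th k) e over E minus k) = 0.\<close>
  define w where "w x = (if x = q then 1 else th k - th' x)" for x
  have kE: "k \<in> E"
    using k SE by auto
  have "card A = DIM('a) + 1"
    unfolding A_def using finite_E qE kE card_E by (simp add: card_Diff_singleton)
  moreover have "A \<subseteq> X"
    using E_subset qX by (auto simp: A_def)
  ultimately have "good_position A"
    using good by blast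
  moreover have "conical_position A"
  proof (rule conical_position_if_relations_multiple
      [where w = w and a = q and b = z and c = i and d = j])
    fix u assume u: "(\<Sum>x\<in>A. u x *\<^sub>R x) = 0"
    define d where "d e = u q * th' e + (if e \<noteq> k then u e else 0)" for e
    have q_E: "q = (\<Sum>e\<in>E. th' e *\<^sub>R e)"
      unfolding th'_def using sum_scaleR_extend_zero[OF finite_E SE] th(2) by simp
    have "(\<Sum>x\<in>A. u x *\<^sub>R x) = u q *\<^sub>R q + (\<Sum>x\<in>E-{k}. u x *\<^sub>R x)"
      unfolding A_def using finite_E qE by (simp add: sum.insert)
    also have "\<dots> = (\<Sum>e\<in>E. d e *\<^sub>R e)"
      unfolding q_E sum_scaleR_extend_zero[OF finite_E Diff_subset, of u "{k}"] d_def
      by (simp add: scaleR_add_left sum.distrib scaleR_sum_right)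
    finally have d0: "(\<Sum>e\<in>E. d e *\<^sub>R e) = 0"
      using u by simp
    have "u x = u q * w x" if "x \<in> A" for x
    proof (cases "x = q")
      case False
      then have "x \<in> E" "x \<noteq> k"
        using that by (auto simp: A_def)
      then show ?thesis
        using relation_const[OF d0 _ kE, of x] False k qE kE by (simp add: d_def w_def th'_def algebra_simps)
    qed (simp add: w_def)
    then show "\<exists>s. \<forall>x\<in>A. u x = s * w x"
      by blast
  next
    have "i \<in> E" "j \<in> E" "i \<noteq> k" "j \<noteq> k" "k \<noteq> z"
      using ij SE above k z by auto
    then show "finite A" "q \<in> A" "z \<in> A" "q \<noteq> z" "i \<in> A" "j \<in> A" "i \<noteq> j"
      using finite_E z ij(3) qE by (auto simp: A_def)
    have "th k > 0" "i \<noteq> q" "j \<noteq> q" "z \<noteq> q"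
      using th(1) k \<open>i \<in> E\<close> \<open>j \<in> E\<close> z qE by auto
    then show "w q > 0" "w z > 0" "w i < 0" "w j < 0"
      using z ij above by (simp_all add: w_def th'_def)
  qed
  ultimately show False
    by (simp add: good_position_def)
qed

lemma coeff_ratio_le:
  assumes pX: "p \<in> X" and qX: "q \<in> X" and Sp: "Sp \<subseteq> Sq" and Sq: "Sq \<subseteq> E"
    and z: "z \<in> E" "z \<notin> Sq" and i: "i \<in> Sq" "i \<notin> Sp" and card_Sp: "card Sp \<ge> 2"
    and lam: "\<forall>e\<in>Sp. lam e > 0" "p = (\<Sum>e\<in>Sp. lam e *\<^sub>R e)"
    and th: "\<forall>e\<in>Sq. th e > 0" "q = (\<Sum>e\<in>Sq. th e *\<^sub>R e)"
    and mj: "m \<in> Sp" "j \<in> Sp"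
  shows "th m * lam j \<le> lam m * th j"
proof (rule ccontr)
  assume "\<not> ?thesis"
  then have less: "lam m * th j < th m * lam j"
    by simp
  define th' where "th' x = (if x \<in> Sq then th x else 0)" for x
  define lam' where "lam' x = (if x \<in> Sp then lam x else 0)" for x
  have SpE: "Sp \<subseteq> E"
    using Sp Sq by auto
  have q_E: "q = (\<Sum>e\<in>E. th' e *\<^sub>R e)"
    unfolding th'_def using sum_scaleR_extend_zero[OF finite_E Sq] th(2) by simp
  have p_E: "p = (\<Sum>e\<in>E. lam' e *\<^sub>R e)"
    unfolding lam'_def using sum_scaleR_extend_zero[OF finite_E SpE] lam(2) by simp
  have card_Sq: "card Sq \<ge> 2"
    using card_Sp card_mono[OF finite_subset[OF Sq finite_E] Sp] by simp
  have qE: "q \<notin> E"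
    using combination_notin[OF Sq card_Sq z th] .
  have pE: "p \<notin> E"
    using combination_notin[OF SpE card_Sp z(1) _ lam] z Sp by auto
  have pq: "p \<noteq> q"
  proof
    assume "p = q"
    then have "(\<Sum>e\<in>E. (lam' e - th' e) *\<^sub>R e) = 0"
      using p_E q_E by (simp add: scaleR_diff_left sum_subtractf)
    then have "lam' i - th' i = lam' z - th' z"
      using relation_const[of "\<lambda>e. lam' e - th' e" i z] i Sq z by blast
    moreover have "z \<notin> Sp"
      using z Sp by auto
    moreover have "th i > 0"
      using th(1) i by blast
    ultimately show False
      using i z by (simp add: lam'_def th'_def)
  qed
  \<comment> \<open>The relation of A is th m p - lam m q + (sum of (lam m th' e - th m lam' e) e) = 0;
    its coefficients at m and z vanish.\<close>
  define A where "A = insert p (insert q (E - {z, m}))"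
  define w where "w x = (if x = p then th m else if x = q then - lam m
                        else lam m * th' x - th m * lam' x)" for x
  have mE: "m \<in> E" "m \<in> Sq"
    using mj Sp Sq by auto
  have th_m: "th m > 0"
    using th(1) mE by auto
  have zm: "z \<noteq> m"
    using z mE by auto
  have "card (E - {z, m}) = card E - 2"
    using finite_E z mE zm by (simp add: card_Diff_subset)
  moreover have "DIM('a) \<ge> 1"
    by (simp add: DIM_positive Suc_leI)
  ultimately have "card A = DIM('a) + 1"
    unfolding A_def using finite_E qE pE pq card_E by simp
  moreover have "A \<subseteq> X"
    using E_subset qX pX by (auto simp: A_def)
  ultimately have "good_position A"
    using good by blast
  moreover have "conical_position A"
  proof (rule conical_position_if_relations_multiple
      [where w = w and a = p and b = i and c = q and d = j])
    fix u assume u: "(\<Sum>x\<in>A. u x *\<^sub>R x) = 0"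
    define d where "d e = u p * lam' e + u q * th' e + (if e \<noteq> z \<and> e \<noteq> m then u e else 0)" for e
    have "(\<Sum>x\<in>A. u x *\<^sub>R x) = u p *\<^sub>R p + (u q *\<^sub>R q + (\<Sum>x\<in>E-{z, m}. u x *\<^sub>R x))"
      unfolding A_def using finite_E qE pE pq by (simp add: sum.insert)
    also have "\<dots> = (\<Sum>e\<in>E. d e *\<^sub>R e)"
      unfolding q_E p_E sum_scaleR_extend_zero[OF finite_E Diff_subset, of u "{z, m}"] d_def
      by (simp add: scaleR_add_left sum.distrib scaleR_sum_right)
    finally have d0: "(\<Sum>e\<in>E. d e *\<^sub>R e) = 0"
      using u by simp
    have dz: "d z = 0"
      using z Sp by (auto simp: d_def lam'_def th'_def)
    have "d m = 0"
      using relation_const[OF d0 mE(1) z(1)] dz by simp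
    then have upq: "u p * lam m + u q * th m = 0"
      using mE mj zm by (simp add: d_def lam'_def th'_def)
    define s where "s = u p / th m"
    have up: "u p = s * th m" and uq: "u q = s * (- lam m)"
      using upq th_m unfolding s_def by (simp_all add: field_simps)
    have "u x = s * w x" if xA: "x \<in> A" for x
    proof -
      consider "x = p" | "x = q" | "x \<in> E" "x \<noteq> z" "x \<noteq> m" "x \<noteq> p" "x \<noteq> q"
        using xA by (auto simp: A_def)
      then show ?thesis
      proof cases
        case 3
        then have "u p * lam' x + u q * th' x + u x = 0"
          using relation_const[OF d0 _ z(1), of x] dz by (simp add: d_def)
        then show ?thesis
          using 3 up uq by (simp add: w_def algebra_simps)
      qed (use up uq pq in \<open>simp_all add: w_def\<close>)
    qed
    then show "\<exists>s. \<forall>x\<in>A. u x = s * w x"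
      by blast
  next
    have iE: "i \<in> E" and jE: "j \<in> E" and jm: "j \<noteq> m"
      using i Sq mj SpE less by auto
    show "finite A" "p \<in> A" "q \<in> A"
      using finite_E by (simp_all add: A_def)
    show "i \<in> A" "j \<in> A" "p \<noteq> i" "q \<noteq> j"
      using iE jE jm i mj z(2) Sp pE qE by (auto simp: A_def)
    have "i \<noteq> p" "i \<noteq> q" "j \<noteq> p" "j \<noteq> q" "j \<in> Sq"
      using iE jE pE qE mj Sp by auto
    moreover have "lam m > 0" "th i > 0"
      using lam(1) th(1) mj i by auto
    ultimately show "w p > 0" "w i > 0" "w q < 0" "w j < 0"
      using th_m pq mj less i by (simp_all add: w_def th'_def lam'_def)
  qed
  ultimately show False
    by (simp add: good_position_def)
qed

end

theorem proposition6p5: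
  fixes E X :: "'a::euclidean_space set"
    and p q :: 'a and Sp Sq :: "'a set" and lam theta :: "'a \<Rightarrow> real"
  assumes simplex: "card E = DIM('a) + 1" "\<not> affine_dependent E" "(\<Sum>e\<in>E. e) = 0"
    and X_fin: "finite X" and E_sub: "E \<subseteq> X" and X_nz: "0 \<notin> X"
    and no_pos_mult: "\<forall>x\<in>X. \<forall>y\<in>X. \<forall>c::real. c > 0 \<and> y = c *\<^sub>R x \<longrightarrow> y = x"
    and good: "\<forall>A. A \<subseteq> X \<and> card A = DIM('a) + 1 \<longrightarrow> good_position A"
    and normalized: "\<forall>x\<in>X. \<forall>S \<mu>. is_support E x S \<and> (\<forall>e\<in>S. \<mu> e > 0)
                        \<and> x = (\<Sum>e\<in>S. \<mu> e *\<^sub>R e) \<longrightarrow> Min (\<mu> ` S) = 1"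
    and pq: "p \<in> X" "q \<in> X"
    and supp: "is_support E p Sp" "is_support E q Sq"
    and sub: "Sp \<subset> Sq" and card2: "card Sp \<ge> 2"
    and lam: "\<forall>e\<in>Sp. lam e > 0" "p = (\<Sum>e\<in>Sp. lam e *\<^sub>R e)"
    and theta: "\<forall>e\<in>Sq. theta e > 0" "q = (\<Sum>e\<in>Sq. theta e *\<^sub>R e)"
  shows "\<forall>e\<in>Sp. lam e = theta e"
proof -
  have finE: "finite E"
    by (rule card_ge_0_finite) (simp add: simplex(1))
  interpret good_configuration E X
    using finE simplex E_sub good by unfold_locales
  have SqE: "Sq \<subseteq> E"
    using supp(2) by (simp add: is_support_def)
  then have finSq: "finite Sq"
    using finE finite_subset by blast
  then have finSp: "finite Sp"
    using sub finite_subset psubset_imp_subset by blast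
  have neSp: "Sp \<noteq> {}"
    using card2 by auto
  have "Sq \<noteq> {}"
    using sub by auto
  then obtain z where z: "z \<in> E" "z \<notin> Sq"
    using support_neq[OF supp(2)] SqE by blast
  obtain i where i: "i \<in> Sq" "i \<notin> Sp"
    using sub by auto
  have proportional: "theta e * lam j = lam e * theta j" if "e \<in> Sp" "j \<in> Sp" for e j
    using coeff_ratio_le[OF pq psubset_imp_subset[OF sub] SqE z i card2 lam theta, of e j]
      coeff_ratio_le[OF pq psubset_imp_subset[OF sub] SqE z i card2 lam theta, of j e] that
    by (simp add: mult.commute)
  have "Min (lam ` Sp) = 1"
    using normalized pq(1) supp(1) lam by blast
  then obtain j where j: "j \<in> Sp" "lam j = 1" "\<forall>e\<in>Sp. 1 \<le> lam e"
    by (rule Min_image_eq_oneD[OF finSp neSp])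
  have "Min (theta ` Sq) = 1"
    using normalized pq(2) supp(2) theta by blast
  then obtain b where b: "b \<in> Sq" "theta b = 1" "\<forall>e\<in>Sq. 1 \<le> theta e"
    by (rule Min_image_eq_oneD[OF finSq \<open>Sq \<noteq> {}\<close>])
  have "theta j = 1"
  proof (rule ccontr)
    assume "theta j \<noteq> 1"
    moreover have "1 \<le> theta j"
      using b(3) j(1) sub by blast
    ultimately have "theta j > 1"
      by simp
    obtain e1 e2 where e12: "e1 \<in> Sp" "e2 \<in> Sp" "e1 \<noteq> e2"
      using card2 finSp by (metis card_le_Suc0_iff_eq not_less_eq_eq numeral_2_eq_2)
    have above: "theta e > theta b" if "e \<in> Sp" for e
    proof -
      have "theta j \<le> lam e * theta j"
        using j(3) that \<open>theta j > 1\<close> by simp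
      also have "\<dots> = theta e"
        using proportional[OF that j(1)] j(2) by simp
      finally show ?thesis
        using b(2) \<open>theta j > 1\<close> by simp
    qed
    have "e1 \<in> Sq" "e2 \<in> Sq"
      using e12 sub by auto
    then show False
      using coeff_not_above_twice[OF pq(2) SqE z theta b(1) _ _ e12(3)] above[OF e12(1)] above[OF e12(2)]
      by linarith
  qed
  then show ?thesis
    using proportional[OF _ j(1)] j(2) by simp
qed

end
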